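(* Consider Method 1.1 (described in the context) and assume in addition: $f$ is convex; each $f_j$ is strongly convex with constant $\mu_j>0$; $D$ satisfies the Slater condition; no point of absolute minimum of $f$ on $\mathbb{R}^n$ (if any) lies in $\operatorname{int}D$. Then $X^*=\{x^*\}$ is a singleton, and, provided the generated sequence $\{y_i\}$ is bounded, every constructed point $x_k$ satisfies $\|x_k-x^*\|\le\sqrt{\varepsilon_k/\mu}$, where $\mu=\min_j\mu_j$; if moreover $f$ is Lipschitz with constant $L$, then also $|f(x_k)-f^*|\le L\sqrt{\varepsilon_k/\mu}$.
   Context: Setting: $f_j$, $j\in J=\{1,\dots,m\}$, are convex functions on $\mathbb{R}^n$; $D=\{x:f_j(x)\le0,\ j\in J\}$; $f$ is continuous and attains its minimum on $D$; each $D_j=\{x:f_j(x)\le0\}$ has nonempty interior. Notation: $K=\{0,1,\dots\}$; $F=\max_jf_j$; $D_\varepsilon=\{x:F(x)\le\varepsilon\}$; $f^*=\min_Df$; $X^*=\{x\in D:f(x)=f^*\}$; $E^*=\{x:f(x)\le f^*\}$; $W^1(x,D_j)=\{a:\|a\|=1,\ \langle a,z-x\rangle\le0\ \forall z\in D_j\}$. Method 1.1: fix $x^*\in X^*$; choose closed convex $M_0\ni x^*$, points $v^j\in\operatorname{int}D_j$, $\varepsilon_0\ge0$, a constant $q\ge1$; $k=i=0$. Step 1: choose $y_i\in M_i\cap E^*$. Step 2: $J_i=\{j:y_i\notin D_j\}$; stop if empty. Step 3: if $y_i\notin D_{\varepsilon_k}$, choose closed convex $G_i\ni x^*$, $Q_i=M_i\cap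 G_i$; else set $i_k=i$, $x_k=y_{i_k}$, choose closed convex $Q_i\ni x^*$, choose $\varepsilon_{k+1}\ge0$, $k\leftarrow k+1$. Step 4: for $j\in J_i$ choose $z_i^j\in(v^j,y_i)$, $z_i^j\notin\operatorname{int}D_j$, with $y_i+q_i^j(z_i^j-y_i)\in D_j$ for some $q_i^j\in[1,q]$; for $j\notin J_i$, $z_i^j=y_i$. Step 5: choose $H_i\subset J_i$ containing some $j_i$ maximizing $\|y_i-z_i^j\|$ over $J_i$. Step 6: for $j\in H_i$ choose nonempty finite $A_i^j\subset W^1(z_i^j,D_j)$; $M_{i+1}=Q_i\cap\{x:\langle a,x-z_i^j\rangle\le0\ \forall j\in H_i, a\in A_i^j\}$; $i\leftarrow i+1$, go to Step 1. *)

theory Defs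
  imports "HOL-Analysis.Analysis"
begin

text \<open>Strong convexity with constant mu (convention: g(t x + (1-t) y) \<le> t g x + (1-t) g y - mu t (1-t) |x-y|^2,
  i.e. g - mu |.|^2 is convex).\<close>
definition strongly_convex_on :: "'a::real_normed_vector set \<Rightarrow> real \<Rightarrow> ('a \<Rightarrow> real) \<Rightarrow> bool" where
  "strongly_convex_on S mu g \<longleftrightarrow> convex S \<and>
     (\<forall>x\<in>S. \<forall>y\<in>S. \<forall>t::real. 0 \<le> t \<and> t \<le> 1 \<longrightarrow>
        g (t *\<^sub>R x + (1 - t) *\<^sub>R y) \<le> t * g x + (1 - t) * g y - mu * t * (1 - t) * (norm (x - y))\<^sup>2)"

definition W1 :: "'a::real_inner \<Rightarrow> 'a set \<Rightarrow> 'a set" where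
  "W1 x S = {a. norm a = 1 \<and> (\<forall>z\<in>S. inner a (z - x) \<le> 0)}"

text \<open>A run of Method 1.1. Data:
  fs j (j \<in> {1..m}) constraint functions, f objective, xstar the fixed point of X*,
  M i, y i, Q i, G i, z i j, H i, A i j: the objects of iteration i;
  v j interior points, q the constant, eps k the tolerances,
  kk i the value of the counter k at the beginning of iteration i,
  N \<in> enat: the index of the iteration at which the method stops (\<infinity> if it never stops).
  Iterations i with i < N perform Steps 3--6; y i is defined for i \<le> N.\<close>
definition method11_run ::
  "nat \<Rightarrow> (nat \<Rightarrow> 'a::euclidean_space \<Rightarrow> real) \<Rightarrow> ('a \<Rightarrow> real) \<Rightarrow> 'a \<Rightarrow>
   (nat \<Rightarrow> 'a set) \<Rightarrow> (nat \<Rightarrow> 'a) \<Rightarrow> real \<Rightarrow> (nat \<Rightarrow> real) \<Rightarrow> (nat \<Rightarrow> nat) \<Rightarrow> enat \<Rightarrow>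
   (nat \<Rightarrow> 'a) \<Rightarrow> (nat \<Rightarrow> 'a set) \<Rightarrow> (nat \<Rightarrow> 'a set) \<Rightarrow> (nat \<Rightarrow> nat \<Rightarrow> 'a) \<Rightarrow>
   (nat \<Rightarrow> nat set) \<Rightarrow> (nat \<Rightarrow> nat \<Rightarrow> 'a set) \<Rightarrow> bool" where
  "method11_run m fs f xstar M v q eps kk N y Q G z H A \<longleftrightarrow>
    (let Dj = (\<lambda>j. {x. fs j x \<le> 0});
         F = (\<lambda>x. Max ((\<lambda>j. fs j x) ` {1..m}));
         D = {x. \<forall>j\<in>{1..m}. fs j x \<le> 0};
         fstar = Inf (f ` D);
         Estar = {x. f x \<le> fstar};
         J = (\<lambda>i. {j\<in>{1..m}. y i \<notin> Dj j})
     in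
      \<comment> \<open>initialisation\<close>
      closed (M 0) \<and> convex (M 0) \<and> xstar \<in> M 0 \<and>
      (\<forall>j\<in>{1..m}. v j \<in> interior (Dj j)) \<and>
      (\<forall>k. eps k \<ge> 0) \<and> q \<ge> 1 \<and> kk 0 = 0 \<and>
      \<comment> \<open>Step 1\<close>
      (\<forall>i. enat i \<le> N \<longrightarrow> y i \<in> M i \<inter> Estar) \<and>
      \<comment> \<open>Step 2: stop exactly when J_i is empty\<close>
      (\<forall>i. enat i \<le> N \<longrightarrow> (J i = {} \<longleftrightarrow> enat i = N)) \<and>
      (\<forall>i. enat i < N \<longrightarrow>
         \<comment> \<open>Step 3\<close>
         (F (y i) > eps (kk i) \<longrightarrow>
            closed (G i) \<and> convex (G i) \<and> xstar \<in> G i \<and> Q i = M i \<inter> G i \<and> kk (Suc i) = kk i) \<and>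
         (F (y i) \<le> eps (kk i) \<longrightarrow>
            closed (Q i) \<and> convex (Q i) \<and> xstar \<in> Q i \<and> kk (Suc i) = Suc (kk i)) \<and>
         \<comment> \<open>Step 4\<close>
         (\<forall>j\<in>J i. z i j \<in> open_segment (v j) (y i) \<and> z i j \<notin> interior (Dj j) \<and>
              (\<exists>qij. 1 \<le> qij \<and> qij \<le> q \<and> y i + qij *\<^sub>R (z i j - y i) \<in> Dj j)) \<and>
         (\<forall>j\<in>{1..m} - J i. z i j = y i) \<and>
         \<comment> \<open>Step 5\<close>
         H i \<subseteq> J i \<and>
         (\<exists>ji\<in>H i. \<forall>j\<in>J i. norm (y i - z i j) \<le> norm (y i - z i ji)) \<and>
         \<comment> \<open>Step 6\<close>
         (\<forall>j\<in>H i. finite (A i j) \<and> A i j \<noteq> {} \<and> A i j \<subseteq> W1 (z i j) (Dj j)) \<and>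
         M (Suc i) = Q i \<inter> {x. \<forall>j\<in>H i. \<forall>a\<in>A i j. inner a (x - z i j) \<le> 0}))"

end

(* If w satisfies f w \<le> f* and f_j w \<le> e for all j, but mu |w - x*|^2 > e, then moving from x*
   a short way towards w makes every f_j strictly negative by strong convexity, while convexity
   keeps f \<le> f*. That point is a Slater point, hence interior to D, and minimises f over D;
   by convexity it is a global minimiser of f, which is excluded. With e = 0 this shows that
   X* = {x*}; with w = x_k and e = eps_k it gives the distance estimate, and the Lipschitz
   estimate follows. *)

theory Submission
  imports Defs
begin

lemma strongly_convex_on_mono:
  assumes "strongly_convex_on S mu g" and "mu' \<le> mu"
  shows "strongly_convex_on S mu' g"
  unfolding strongly_convex_on_def
proof (intro conjI ballI allI impI)
  show "convex S" using assms(1) by (simp add: strongly_convex_on_def)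
  fix x y and t :: real assume "x \<in> S" "y \<in> S" "0 \<le> t \<and> t \<le> 1"
  then have "mu' * t * (1 - t) * (norm (x - y))\<^sup>2 \<le> mu * t * (1 - t) * (norm (x - y))\<^sup>2"
    using assms(2) by (intro mult_right_mono) auto
  moreover have "g (t *\<^sub>R x + (1 - t) *\<^sub>R y) \<le> t * g x + (1 - t) * g y - mu * t * (1 - t) * (norm (x - y))\<^sup>2"
    using assms(1) \<open>x \<in> S\<close> \<open>y \<in> S\<close> \<open>0 \<le> t \<and> t \<le> 1\<close> by (simp add: strongly_convex_on_def)
  ultimately show
    "g (t *\<^sub>R x + (1 - t) *\<^sub>R y) \<le> t * g x + (1 - t) * g y - mu' * t * (1 - t) * (norm (x - y))\<^sup>2"
    by linarith
qed

lemma strongly_convex_on_segment_le: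
  assumes "strongly_convex_on UNIV mu g" and "g x \<le> 0" and "g w \<le> e" and "0 \<le> t" "t \<le> 1"
  shows "g ((1 - t) *\<^sub>R x + t *\<^sub>R w) \<le> t * (e - (1 - t) * mu * (norm (w - x))\<^sup>2)"
proof -
  have "g ((1 - t) *\<^sub>R x + t *\<^sub>R w) = g (t *\<^sub>R w + (1 - t) *\<^sub>R x)"
    by (simp add: add.commute)
  also have "\<dots> \<le> t * g w + (1 - t) * g x - mu * t * (1 - t) * (norm (w - x))\<^sup>2"
    using assms(1,4,5) by (simp add: strongly_convex_on_def)
  also have "\<dots> \<le> t * e - mu * t * (1 - t) * (norm (w - x))\<^sup>2"
    using mult_left_mono[OF assms(3,4)] mult_left_mono[OF assms(2), of "1 - t"] assms(5) by simp
  finally show ?thesis by (simp add: algebra_simps)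
qed

lemma slater_points_subset_interior:
  fixes g :: "'i \<Rightarrow> 'a::euclidean_space \<Rightarrow> real"
  assumes "finite I" and "\<forall>j\<in>I. convex_on UNIV (g j)"
  shows "{x. \<forall>j\<in>I. g j x < 0} \<subseteq> interior {x. \<forall>j\<in>I. g j x \<le> 0}"
proof (rule interior_maximal)
  have "{x. \<forall>j\<in>I. g j x < 0} = (\<Inter>j\<in>I. {x. g j x < 0})" by auto
  moreover have "open {x. g j x < 0}" if "j \<in> I" for j
    using that assms(2) convex_on_continuous[of UNIV "g j"] by (intro open_Collect_less) auto
  ultimately show "open {x. \<forall>j\<in>I. g j x < 0}" using assms(1) by (simp add: open_INT)
qed auto

lemma convex_on_interior_minimum_imp_global:
  fixes f :: "'a::real_normed_vector \<Rightarrow> real"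
  assumes "convex_on UNIV f" and "p \<in> interior S" and "\<forall>w\<in>S. f p \<le> f w"
  shows "f p \<le> f w"
proof -
  obtain r where "r > 0" "ball p r \<subseteq> S" using assms(2) by (meson mem_interior)
  then show ?thesis
    using convex_local_global_minimum[OF \<open>r > 0\<close> assms(1)] assms(3) by blast
qed

lemma strongly_convex_constraints_error_bound:
  fixes f :: "'a::euclidean_space \<Rightarrow> real" and g :: "'i \<Rightarrow> 'a \<Rightarrow> real" and I :: "'i set"
  defines "D \<equiv> {x. \<forall>j\<in>I. g j x \<le> 0}"
  assumes "convex_on UNIV f" and "finite I"
    and "\<forall>j\<in>I. convex_on UNIV (g j)" and "\<forall>j\<in>I. strongly_convex_on UNIV mu (g j)"
    and no_interior_global_min: "\<forall>p. (\<forall>w. f p \<le> f w) \<longrightarrow> p \<notin> interior D"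
    and "x \<in> D" and x_min: "\<forall>w\<in>D. f x \<le> f w"
    and "f w \<le> f x" and "\<forall>j\<in>I. g j w \<le> e" and "0 \<le> e"
  shows "mu * (norm (w - x))\<^sup>2 \<le> e"
proof (rule ccontr)
  define d where "d = mu * (norm (w - x))\<^sup>2"
  assume "\<not> mu * (norm (w - x))\<^sup>2 \<le> e"
  then have "e < d" by (simp add: d_def)
  define t where "t = (d - e) / (2 * d)"
  have "0 < t" "t \<le> 1/2" using \<open>e < d\<close> \<open>0 \<le> e\<close> by (auto simp: t_def field_simps)
  have "(1 - t) * d = (d + e) / 2" using \<open>e < d\<close> \<open>0 \<le> e\<close> by (simp add: t_def field_simps)
  then have margin: "e - (1 - t) * d < 0" using \<open>e < d\<close> by simp
  define p where "p = (1 - t) *\<^sub>R x + t *\<^sub>R w"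
  have "g j p < 0" if "j \<in> I" for j
  proof -
    have "g j p \<le> t * (e - (1 - t) * d)"
      unfolding p_def d_def mult.assoc[symmetric]
      using assms(5,7,10) that \<open>0 < t\<close> \<open>t \<le> 1/2\<close>
      by (intro strongly_convex_on_segment_le) (auto simp: D_def)
    also have "\<dots> < 0" using \<open>0 < t\<close> margin by (simp add: mult_pos_neg)
    finally show ?thesis .
  qed
  then have "p \<in> interior D"
    using slater_points_subset_interior[OF assms(3,4)] by (auto simp: D_def)
  have "f p \<le> (1 - t) * f x + t * f w"
    unfolding p_def using assms(2) \<open>0 < t\<close> \<open>t \<le> 1/2\<close> by (intro convex_onD) auto
  also have "\<dots> \<le> f x"
    using mult_left_mono[OF \<open>f w \<le> f x\<close>, of t] \<open>0 < t\<close> by (simp add: algebra_simps)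
  finally have "\<forall>w\<in>D. f p \<le> f w" using x_min by fastforce
  then have "\<forall>w. f p \<le> f w"
    using convex_on_interior_minimum_imp_global[OF assms(2) \<open>p \<in> interior D\<close>] by blast
  with no_interior_global_min \<open>p \<in> interior D\<close> show False by blast
qed

lemma lipschitz_on_UNIV_abs_diff_le:
  fixes f :: "'a::metric_space \<Rightarrow> real"
  assumes "L-lipschitz_on UNIV f" and "dist w x \<le> r"
  shows "\<bar>f w - f x\<bar> \<le> L * r"
proof -
  have "\<bar>f w - f x\<bar> \<le> L * dist w x"
    using lipschitz_onD[OF assms(1)] by (simp add: dist_real_def)
  also have "\<dots> \<le> L * r"
    using assms(2) lipschitz_on_nonneg[OF assms(1)] by (rule mult_left_mono)
  finally show ?thesis .
qed

lemma method11_run_objective_le_opt: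
  assumes "method11_run m fs f xstar M v q eps kk N y Q G z H A" and "enat i \<le> N"
  shows "f (y i) \<le> Inf (f ` {x. \<forall>j\<in>{1..m}. fs j x \<le> 0})"
  using assms unfolding method11_run_def Let_def by auto

lemma method11_run_eps_nonneg:
  assumes "method11_run m fs f xstar M v q eps kk N y Q G z H A"
  shows "0 \<le> eps k"
  using assms unfolding method11_run_def Let_def by auto

theorem theorem1p1p4:
  fixes m :: nat and fs :: "nat \<Rightarrow> 'a::euclidean_space \<Rightarrow> real" and f :: "'a \<Rightarrow> real"
    and mu :: "nat \<Rightarrow> real" and xstar :: 'a
    and M :: "nat \<Rightarrow> 'a set" and v :: "nat \<Rightarrow> 'a" and q :: real and eps :: "nat \<Rightarrow> real"
    and kk :: "nat \<Rightarrow> nat" and N :: enat and y :: "nat \<Rightarrow> 'a"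
    and Q G :: "nat \<Rightarrow> 'a set" and z :: "nat \<Rightarrow> nat \<Rightarrow> 'a" and H :: "nat \<Rightarrow> nat set"
    and A :: "nat \<Rightarrow> nat \<Rightarrow> 'a set"
  defines "D \<equiv> {x. \<forall>j\<in>{1..m}. fs j x \<le> 0}"
  defines "fstar \<equiv> Inf (f ` D)"
  defines "Xstar \<equiv> {x\<in>D. f x = fstar}"
  defines "F \<equiv> (\<lambda>x. Max ((\<lambda>j. fs j x) ` {1..m}))"
  defines "mumin \<equiv> Min (mu ` {1..m})"
  assumes fs_convex: "\<forall>j\<in>{1..m}. convex_on UNIV (fs j)"
    and f_cont: "continuous_on UNIV f"
    and f_attains: "\<exists>x\<in>D. \<forall>w\<in>D. f x \<le> f w"
    and Dj_int: "\<forall>j\<in>{1..m}. interior {x. fs j x \<le> 0} \<noteq> {}"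
    and f_convex: "convex_on UNIV f"
    and mu_pos: "\<forall>j\<in>{1..m}. mu j > 0"
    and fs_strong: "\<forall>j\<in>{1..m}. strongly_convex_on UNIV (mu j) (fs j)"
    and slater: "\<exists>x. \<forall>j\<in>{1..m}. fs j x < 0"
    and no_abs_min_int: "\<forall>x. (\<forall>w. f x \<le> f w) \<longrightarrow> x \<notin> interior D"
    and xstar: "xstar \<in> Xstar"
    and run: "method11_run m fs f xstar M v q eps kk N y Q G z H A"
  shows "Xstar = {xstar} \<and>
    (bounded {y i | i. enat i \<le> N} \<longrightarrow>
       (\<forall>i. enat i < N \<and> F (y i) \<le> eps (kk i) \<longrightarrow>
          norm (y i - xstar) \<le> sqrt (eps (kk i) / mumin) \<and>
          (\<forall>L. L-lipschitz_on UNIV f \<longrightarrow> \<bar>f (y i) - fstar\<bar> \<le> L * sqrt (eps (kk i) / mumin))))"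
proof -
  obtain x0 where "x0 \<in> D" and x0_min: "\<forall>w\<in>D. f x0 \<le> f w" using f_attains by blast
  then have fstar_le: "fstar \<le> f w" if "w \<in> D" for w
    unfolding fstar_def using that by (intro cInf_lower) (auto intro: bdd_belowI2)
  have "xstar \<in> D" and "f xstar = fstar" using xstar by (auto simp: Xstar_def)
  have "m \<noteq> 0"
  proof
    assume "m = 0"
    then have "interior D = UNIV" by (simp add: D_def)
    with x0_min no_abs_min_int show False by (auto simp: \<open>m = 0\<close> D_def)
  qed
  then have "0 < mumin" using mu_pos by (auto simp: mumin_def)
  have "\<forall>j\<in>{1..m}. strongly_convex_on UNIV mumin (fs j)"
    using fs_strong by (auto simp: mumin_def intro: strongly_convex_on_mono)
  note error_bound = strongly_convex_constraints_error_bound[OF f_convex finite_atLeastAtMost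
      fs_convex this no_abs_min_int[unfolded D_def] \<open>xstar \<in> D\<close>[unfolded D_def]]
  have "Xstar \<subseteq> {xstar}"
  proof
    fix w assume "w \<in> Xstar"
    then have "mumin * (norm (w - xstar))\<^sup>2 \<le> 0"
      using fstar_le \<open>f xstar = fstar\<close> by (intro error_bound) (auto simp: Xstar_def D_def)
    with \<open>0 < mumin\<close> show "w \<in> {xstar}" by (simp add: mult_le_0_iff)
  qed
  moreover have "norm (y i - xstar) \<le> sqrt (eps (kk i) / mumin)"
    if "enat i < N" and "F (y i) \<le> eps (kk i)" for i
  proof -
    have "fs j (y i) \<le> eps (kk i)" if "j \<in> {1..m}" for j
      using \<open>F (y i) \<le> eps (kk i)\<close> Max_ge[of "(\<lambda>j. fs j (y i)) ` {1..m}"] that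
      by (fastforce simp: F_def)
    then have "mumin * (norm (y i - xstar))\<^sup>2 \<le> eps (kk i)"
      using fstar_le \<open>f xstar = fstar\<close> method11_run_objective_le_opt[OF run, of i] \<open>enat i < N\<close>
        method11_run_eps_nonneg[OF run]
      by (intro error_bound) (auto simp: fstar_def D_def)
    with \<open>0 < mumin\<close> show ?thesis by (simp add: real_le_rsqrt field_simps)
  qed
  ultimately show ?thesis
    using xstar lipschitz_on_UNIV_abs_diff_le[of _ f _ xstar] \<open>f xstar = fstar\<close>
    by (auto simp: dist_norm)
qed

end
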